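(* Let $(L,|\cdot|)$ be a complete field with a nontrivial discrete non-Archimedean absolute value. Let $\mathcal{T}$ be the set of closed balls $\overline{B(z_0,r)}=\{z\in L:|z-z_0|\le r\}$ with $z_0\in L$ and $r\in|L^*|\cup\{0\}$ (so $L\subset\mathcal T$ via $z\mapsto\overline{B(z,0)}$), endowed with (i) the weak topology, the weakest topology making all maps $x\mapsto|Q(x)|:=\sup_{z\in x}|Q(z)|$ continuous for $Q\in L[T]$, and (ii) the strong topology, induced by the distance $d(x,x')=\max\{|\mathrm{diam}(x\vee x')-\mathrm{diam}(x)|,|\mathrm{diam}(x\vee x')-\mathrm{diam}(x')|\}$, where $\mathrm{diam}(x)=\sup_{z,z'\in x}|z-z'|$ and $x\vee x'$ is the smallest closed ball containing $x$ and $x'$. Let $F\subset L$ be a bounded infinite subset. Then either (1) the weak closure of $F$ in $\mathcal T$ is compact for the strong topology; or (2) there exists a closed ball $x\in\mathcal T$ of positive radius containing infinitely many points $x_n\in F$ such that $x_n\to x$ in the weak topology.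
   Context: Bounded means $\sup_{z\in F}|z|<\infty$. The restriction of $d$ to $L$ is the distance $|z-z'|$. *)

theory Defs
  imports "HOL-Analysis.Analysis" "HOL-Computational_Algebra.Polynomial"
begin

definition nonarch_abs :: "('a::field \<Rightarrow> real) \<Rightarrow> bool" where
  "nonarch_abs v \<longleftrightarrow>
     (\<forall>x. 0 \<le> v x) \<and> (\<forall>x. v x = 0 \<longleftrightarrow> x = 0) \<and>
     (\<forall>x y. v (x * y) = v x * v y) \<and> (\<forall>x y. v (x + y) \<le> max (v x) (v y))"

definition nontrivial_abs :: "('a::field \<Rightarrow> real) \<Rightarrow> bool" where
  "nontrivial_abs v \<longleftrightarrow> (\<exists>x. x \<noteq> 0 \<and> v x \<noteq> 1)"

definition discrete_abs :: "('a::field \<Rightarrow> real) \<Rightarrow> bool" where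
  "discrete_abs v \<longleftrightarrow> (\<exists>\<rho>. 0 < \<rho> \<and> \<rho> < 1 \<and> v ` (UNIV - {0}) = range (\<lambda>k::int. \<rho> powi k))"

definition complete_abs :: "('a::field \<Rightarrow> real) \<Rightarrow> bool" where
  "complete_abs v \<longleftrightarrow>
     (\<forall>s::nat \<Rightarrow> 'a. (\<forall>e>0. \<exists>N. \<forall>m\<ge>N. \<forall>n\<ge>N. v (s m - s n) < e) \<longrightarrow>
        (\<exists>l. \<forall>e>0. \<exists>N. \<forall>n\<ge>N. v (s n - l) < e))"

definition cball_v :: "('a::field \<Rightarrow> real) \<Rightarrow> 'a \<Rightarrow> real \<Rightarrow> 'a set" where
  "cball_v v z0 r = {z. v (z - z0) \<le> r}"

definition balls_T :: "('a::field \<Rightarrow> real) \<Rightarrow> 'a set set" where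
  "balls_T v = {cball_v v z0 r | z0 r. r \<in> v ` (UNIV - {0}) \<union> {0}}"

definition poly_abs :: "('a::field \<Rightarrow> real) \<Rightarrow> 'a poly \<Rightarrow> 'a set \<Rightarrow> real" where
  "poly_abs v Q x = Sup ((\<lambda>z. v (poly Q z)) ` x)"

definition weak_top :: "('a::field \<Rightarrow> real) \<Rightarrow> 'a set topology" where
  "weak_top v = topology_generated_by
     ({balls_T v} \<union> {{x \<in> balls_T v. poly_abs v Q x \<in> U} | Q U. open U})"

definition diam_v :: "('a::field \<Rightarrow> real) \<Rightarrow> 'a set \<Rightarrow> real" where
  "diam_v v x = Sup {v (z - z') | z z'. z \<in> x \<and> z' \<in> x}"

definition join_T :: "('a::field \<Rightarrow> real) \<Rightarrow> 'a set \<Rightarrow> 'a set \<Rightarrow> 'a set" where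
  "join_T v x x' = (THE b. b \<in> balls_T v \<and> x \<union> x' \<subseteq> b \<and>
                       (\<forall>b' \<in> balls_T v. x \<union> x' \<subseteq> b' \<longrightarrow> b \<subseteq> b'))"

definition dist_T :: "('a::field \<Rightarrow> real) \<Rightarrow> 'a set \<Rightarrow> 'a set \<Rightarrow> real" where
  "dist_T v x x' = max \<bar>diam_v v (join_T v x x') - diam_v v x\<bar>
                        \<bar>diam_v v (join_T v x x') - diam_v v x'\<bar>"

definition strong_top :: "('a::field \<Rightarrow> real) \<Rightarrow> 'a set topology" where
  "strong_top v = Metric_space.mtopology (balls_T v) (dist_T v)"

end

theory Submission
  imports Defs
begin

(* If more than deg Q points of a ball x lie at mutual distance equal to its radius, they
   already control the sup of |Q| on x (induction on deg Q via synthetic division). So a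
   sequence in F of such points in a ball x realises |Q(x)| for almost all n, for every Q: it
   converges weakly to x. If no such sequence exists, every ball of radius r meets F in a set
   covered by finitely many balls of radius < r, hence (the value group being discrete) of
   radius at most rho r. Then F is totally bounded and its closure in the complete field is
   compact; moreover finitely many weak conditions |T - a| < r / rho, |T - b| > rho r separate
   every ball of positive radius from F, so the weak closure of F consists of points only and
   is the image of that compact closure under the isometry z \<mapsto> {z}. *)

lemma limitin_topology_generated_by:
  assumes "l \<in> \<Union>S" and "\<And>U. U \<in> S \<Longrightarrow> l \<in> U \<Longrightarrow> eventually (\<lambda>n. f n \<in> U) F"
  shows "limitin (topology_generated_by S) f l F"
proof -
  have "eventually (\<lambda>n. f n \<in> U) F" if "generate_topology_on S U" "l \<in> U" for U
    using that
  proof (induction rule: generate_topology_on.induct)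
    case (Int a b)
    then show ?case
      by (auto intro: eventually_conj)
  next
    case (UN K)
    then obtain k where "k \<in> K" "eventually (\<lambda>n. f n \<in> k) F"
      by blast
    then show ?case
      by (auto elim: eventually_mono)
  qed (use assms in auto)
  then show ?thesis
    unfolding limitin_def using assms(1) openin_topology_generated_by by auto
qed

lemma poly_linear [simp]: "poly [:-a, 1:] z = z - (a::'a::comm_ring_1)"
  by simp

lemma poly_eq_synthetic_div: "poly Q z = (z - c) * poly (synthetic_div Q c) z + poly Q (c::'a::comm_ring_1)"
proof -
  have "poly ([:-c, 1:] * synthetic_div Q c + [:poly Q c:]) z = poly Q z"
    unfolding synthetic_div_correct' ..
  then show ?thesis
    by (simp add: algebra_simps)
qed

locale nonarch_field =
  fixes v :: "'a::field \<Rightarrow> real"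
  assumes nonarch: "nonarch_abs v"
begin

lemma val_nonneg [simp]: "0 \<le> v x"
  using nonarch unfolding nonarch_abs_def by blast

lemma val_eq_0_iff [simp]: "v x = 0 \<longleftrightarrow> x = 0"
  using nonarch unfolding nonarch_abs_def by blast

lemma val_mult: "v (x * y) = v x * v y"
  using nonarch unfolding nonarch_abs_def by blast

lemma val_add_le_max: "v (x + y) \<le> max (v x) (v y)"
  using nonarch unfolding nonarch_abs_def by blast

lemma val_0 [simp]: "v 0 = 0"
  by simp

lemma val_1 [simp]: "v 1 = 1"
  using val_mult[of 1 1] val_eq_0_iff[of 1] by (metis mult_cancel_left1 one_neq_zero)

lemma val_uminus [simp]: "v (- x) = v x"
proof -
  have "v (-1) * v (-1) = 1"
    using val_mult[of "-1" "-1"] val_1 by simp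
  then have "v (-1) = 1"
    using val_nonneg[of "-1"] by (metis abs_of_nonneg abs_mult_self_eq mult_1_right power2_eq_square
        real_sqrt_abs real_sqrt_one)
  then show ?thesis
    using val_mult[of "-1" x] by simp
qed

lemma val_minus_commute: "v (a - b) = v (b - a)"
  by (metis minus_diff_eq val_uminus)

lemma val_diff_le_max: "v (x - y) \<le> max (v (x - z)) (v (z - y))"
  using val_add_le_max[of "x - z" "z - y"] by simp

lemma val_diff_le_max_val: "v (x - y) \<le> max (v x) (v y)"
  using val_add_le_max[of x "- y"] by simp

lemma val_add_le: "v (x + y) \<le> v x + v y"
  using val_add_le_max[of x y] val_nonneg[of x] val_nonneg[of y] by linarith

lemma abs_val_diff_le: "\<bar>v x - v y\<bar> \<le> v (x - y)"
proof -
  have "v x \<le> max (v (x - y)) (v y)" "v y \<le> max (v (x - y)) (v x)"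
    using val_diff_le_max[of x 0 y] val_diff_le_max[of y 0 x] val_minus_commute[of x y] by simp_all
  then show ?thesis
    using val_nonneg[of x] val_nonneg[of y] val_nonneg[of "x - y"] by argo
qed

sublocale L: Metric_space UNIV "\<lambda>a b. v (a - b)"
proof
  fix x y z :: 'a
  show "0 \<le> v (x - y)" "v (x - y) = v (y - x)" "v (x - y) = 0 \<longleftrightarrow> x = y"
    by (simp_all add: val_minus_commute)
  show "v (x - z) \<le> v (x - y) + v (y - z)"
    using val_diff_le_max[of x z y] val_nonneg[of "x - y"] val_nonneg[of "y - z"] by argo
qed

lemma mcomplete_if_complete_abs: "complete_abs v \<Longrightarrow> L.mcomplete"
  unfolding L.mcomplete_def L.MCauchy_def L.limitin_metric complete_abs_def eventually_sequentially
  by (metis UNIV_I)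

definition value_set :: "real set" where
  "value_set = v ` (UNIV - {0})"

definition radii :: "real set" where
  "radii = value_set \<union> {0}"

lemma value_set_pos: "r \<in> value_set \<Longrightarrow> 0 < r"
  unfolding value_set_def by (auto simp: less_le)

lemma val_in_radii: "v x \<in> radii"
  unfolding radii_def value_set_def by (cases "x = 0") auto

lemma radii_nonneg: "r \<in> radii \<Longrightarrow> 0 \<le> r"
  unfolding radii_def using value_set_pos by fastforce

lemma radii_attained: "r \<in> radii \<Longrightarrow> \<exists>c. v c = r"
  unfolding radii_def value_set_def by auto

lemma max_in_radii: "r \<in> radii \<Longrightarrow> s \<in> radii \<Longrightarrow> max r s \<in> radii"
  by (simp add: max_def)

abbreviation vball :: "'a \<Rightarrow> real \<Rightarrow> 'a set" where
  "vball \<equiv> cball_v v"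

lemma mem_vball: "z \<in> vball a r \<longleftrightarrow> v (z - a) \<le> r"
  by (simp add: cball_v_def)

lemma centre_in_vball: "0 \<le> r \<Longrightarrow> a \<in> vball a r"
  by (simp add: mem_vball)

lemma vball_0: "vball a 0 = {a}"
proof -
  have "v (z - a) \<le> 0 \<longleftrightarrow> z = a" for z
    using val_nonneg[of "z - a"] val_eq_0_iff[of "z - a"] by (metis antisym order_refl right_minus_eq)
  then show ?thesis
    unfolding mem_vball set_eq_iff by simp
qed

lemma val_diff_le_radius: "z \<in> vball a r \<Longrightarrow> z' \<in> vball a r \<Longrightarrow> v (z - z') \<le> r"
  using val_diff_le_max[of z z' a] val_minus_commute[of a z'] by (simp add: mem_vball)

lemma vball_subset:
  assumes "r \<le> t" "v (a - c) \<le> t"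
  shows "vball a r \<subseteq> vball c t"
proof
  fix z
  assume "z \<in> vball a r"
  then show "z \<in> vball c t"
    using val_diff_le_max[of z c a] assms by (simp add: mem_vball)
qed

lemma vball_subsetD:
  assumes "vball a r \<subseteq> vball c t" "r \<in> radii"
  shows "r \<le> t" "v (a - c) \<le> t"
proof -
  have "a \<in> vball c t"
    using assms(1) centre_in_vball[OF radii_nonneg[OF assms(2)]] by blast
  then show ac: "v (a - c) \<le> t"
    by (simp add: mem_vball)
  obtain e where e: "v e = r"
    using radii_attained assms(2) by blast
  then have "a + e \<in> vball a r"
    by (simp add: mem_vball)
  then have "a + e \<in> vball c t"
    using assms(1) by blast
  then have "v (a + e - c) \<le> t"
    by (simp add: mem_vball)
  then show "r \<le> t"
    using val_diff_le_max[of "a + e" a c] ac e val_minus_commute[of a c] by simp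
qed

lemma balls_T_iff: "x \<in> balls_T v \<longleftrightarrow> (\<exists>a r. x = vball a r \<and> r \<in> radii)"
  unfolding balls_T_def radii_def value_set_def by auto

lemma balls_TE:
  assumes "x \<in> balls_T v"
  obtains a r where "x = vball a r" "r \<in> radii"
  using assms unfolding balls_T_iff by blast

lemma vball_in_balls_T: "r \<in> radii \<Longrightarrow> vball a r \<in> balls_T v"
  unfolding balls_T_iff by blast

lemma singleton_in_balls_T: "{a} \<in> balls_T v"
  using vball_in_balls_T[of 0 a] by (simp add: radii_def vball_0)

lemma diam_vball: "r \<in> radii \<Longrightarrow> diam_v v (vball a r) = r"
  unfolding diam_v_def
proof (rule cSup_eq_maximum)
  assume r: "r \<in> radii"
  then obtain e where "v e = r"
    using radii_attained by blast
  then have "r = v ((a + e) - a) \<and> a + e \<in> vball a r \<and> a \<in> vball a r"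
    using radii_nonneg[OF r] by (simp add: mem_vball)
  then show "r \<in> {v (z - z') |z z'. z \<in> vball a r \<and> z' \<in> vball a r}"
    by blast
qed (auto simp: val_diff_le_radius)

lemma join_T_vball:
  assumes r: "r \<in> radii" and s: "s \<in> radii"
  shows "join_T v (vball a r) (vball b s) = vball a (max r (max s (v (a - b))))"
proof -
  define R where "R = max r (max s (v (a - b)))"
  have R: "R \<in> radii"
    unfolding R_def using r s val_in_radii by (intro max_in_radii)
  have "vball a r \<subseteq> vball a R" "vball b s \<subseteq> vball a R"
    using radii_nonneg[OF R] val_minus_commute[of a b] unfolding R_def
    by (intro vball_subset; simp)+
  then have cover: "vball a r \<union> vball b s \<subseteq> vball a R"
    by blast
  have least: "vball a R \<subseteq> b'" if ball: "b' \<in> balls_T v" and sub: "vball a r \<union> vball b s \<subseteq> b'"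
    for b'
  proof -
    obtain c t where b': "b' = vball c t" "t \<in> radii"
      using ball by (rule balls_TE)
    have "vball a r \<subseteq> vball c t" "vball b s \<subseteq> vball c t"
      using sub unfolding b'(1) by blast+
    then have "r \<le> t" "v (a - c) \<le> t" "s \<le> t" "v (b - c) \<le> t"
      using vball_subsetD r s by blast+
    moreover have "v (a - b) \<le> t"
      using val_diff_le_max[of a b c] val_minus_commute[of b c] calculation by simp
    ultimately have "R \<le> t"
      unfolding R_def by simp
    then show ?thesis
      using vball_subset \<open>v (a - c) \<le> t\<close> b'(1) by blast
  qed
  show ?thesis
    unfolding join_T_def R_def[symmetric]
  proof (rule the_equality)
    show "vball a R \<in> balls_T v \<and> vball a r \<union> vball b s \<subseteq> vball a R \<and>
      (\<forall>b'\<in>balls_T v. vball a r \<union> vball b s \<subseteq> b' \<longrightarrow> vball a R \<subseteq> b')"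
      using vball_in_balls_T[OF R] cover least by blast
  next
    fix x
    assume x: "x \<in> balls_T v \<and> vball a r \<union> vball b s \<subseteq> x \<and>
      (\<forall>b'\<in>balls_T v. vball a r \<union> vball b s \<subseteq> b' \<longrightarrow> x \<subseteq> b')"
    then have "x \<subseteq> vball a R"
      using vball_in_balls_T[OF R] cover by blast
    moreover have "vball a R \<subseteq> x"
      using x least by blast
    ultimately show "x = vball a R"
      by (rule subset_antisym)
  qed
qed

lemma dist_T_vball:
  assumes r: "r \<in> radii" and s: "s \<in> radii"
  shows "dist_T v (vball a r) (vball b s) =
    max (max r (max s (v (a - b))) - r) (max r (max s (v (a - b))) - s)"
proof -
  define R where "R = max r (max s (v (a - b)))"
  have "R \<in> radii"
    unfolding R_def using r s val_in_radii by (intro max_in_radii)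
  moreover have "r \<le> R" "s \<le> R"
    unfolding R_def by simp_all
  ultimately show ?thesis
    unfolding dist_T_def join_T_vball[OF r s] diam_vball[OF r] diam_vball[OF s] R_def[symmetric]
    by (simp add: diam_vball)
qed

lemma dist_T_singleton: "dist_T v {a} {b} = v (a - b)"
  using dist_T_vball[of 0 0 a b] by (simp add: radii_def vball_0)

sublocale T: Metric_space "balls_T v" "dist_T v"
proof
  fix x y
  show "0 \<le> dist_T v x y"
    unfolding dist_T_def by simp
  have "join_T v x y = join_T v y x"
    by (simp only: join_T_def Un_commute)
  then show "dist_T v x y = dist_T v y x"
    unfolding dist_T_def by (simp add: max.commute)
next
  fix x y z
  assume "x \<in> balls_T v" "y \<in> balls_T v" "z \<in> balls_T v"
  then obtain a r b s c t where x: "x = vball a r" "r \<in> radii" and y: "y = vball b s" "s \<in> radii"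
    and z: "z = vball c t" "t \<in> radii"
    by (metis balls_TE)
  have "v (a - c) \<le> max (v (a - b)) (v (b - c))"
    by (rule val_diff_le_max)
  then show "dist_T v x z \<le> dist_T v x y + dist_T v y z"
    unfolding x y z dist_T_vball[OF x(2) y(2)] dist_T_vball[OF y(2) z(2)] dist_T_vball[OF x(2) z(2)]
    using radii_nonneg[OF x(2)] radii_nonneg[OF y(2)] radii_nonneg[OF z(2)]
      val_nonneg[of "a - b"] val_nonneg[of "b - c"] val_nonneg[of "a - c"] by argo
  show "dist_T v x y = 0 \<longleftrightarrow> x = y"
  proof
    assume "dist_T v x y = 0"
    then have "r = s" "v (a - b) \<le> r"
      using dist_T_vball[OF x(2) y(2), of a b] unfolding x y by argo+
    then show "x = y"
      using vball_subset[of r s a b] vball_subset[of s r b a] val_minus_commute[of a b]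
      unfolding x y by auto
  next
    assume "x = y"
    then show "dist_T v x y = 0"
      using dist_T_vball[OF x(2) x(2), of a a] radii_nonneg[OF x(2)] unfolding x by simp
  qed
qed

lemma poly_val_le_if_equidistant_points:
  assumes r: "0 < r" and P: "finite P" "P \<subseteq> vball z0 r" "\<forall>p\<in>P. \<forall>q\<in>P. p \<noteq> q \<longrightarrow> v (p - q) = r"
    and deg: "degree Q < card P" and m: "\<forall>p\<in>P. v (poly Q p) \<le> m" and z: "z \<in> vball z0 r"
  shows "v (poly Q z) \<le> m"
  using P deg m
proof (induction "degree Q" arbitrary: Q P m)
  case 0
  then obtain p where "p \<in> P"
    by fastforce
  moreover obtain c where "Q = [:c:]"
    using degree0_coeffs[OF 0(1)[symmetric]] by blast
  ultimately show ?case
    using 0 by auto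
next
  case (Suc d)
  then obtain p where p: "p \<in> P"
    by fastforce
  define R where "R = synthetic_div Q p"
  have deg_R: "d = degree R"
    unfolding R_def degree_synthetic_div using Suc(2) by simp
  have Q_eq: "poly Q y = (y - p) * poly R y + poly Q p" for y
    unfolding R_def by (rule poly_eq_synthetic_div)
  have R_bound: "v (poly R q) \<le> m / r" if q: "q \<in> P - {p}" for q
  proof -
    have "v (poly Q q) \<le> m" "v (poly Q p) \<le> m"
      using Suc(7) q p by auto
    then have "v (poly Q q - poly Q p) \<le> m"
      using val_diff_le_max_val[of "poly Q q" "poly Q p"] by simp
    moreover have "v (poly Q q - poly Q p) = r * v (poly R q)"
      using Q_eq[of q] Suc(5) q p by (simp add: val_mult)
    ultimately show ?thesis
      using r by (simp add: field_simps mult.commute)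
  qed
  have "v (poly R z) \<le> m / r"
  proof (rule Suc(1)[OF deg_R])
    show "finite (P - {p})"
      using Suc(3) by simp
    show "P - {p} \<subseteq> vball z0 r"
      using Suc(4) by blast
    show "\<forall>x\<in>P - {p}. \<forall>y\<in>P - {p}. x \<noteq> y \<longrightarrow> v (x - y) = r"
      using Suc(5) by blast
    show "degree R < card (P - {p})"
      using p Suc(2,3,6) deg_R by simp
    show "\<forall>x\<in>P - {p}. v (poly R x) \<le> m / r"
      using R_bound by blast
  qed
  moreover have "v (z - p) \<le> r"
    using val_diff_le_radius z p Suc(4) by blast
  ultimately have "v ((z - p) * poly R z) \<le> m"
    using r mult_mono[of "v (z - p)" r "v (poly R z)" "m / r"] by (simp add: val_mult)
  moreover have "v (poly Q p) \<le> m"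
    using Suc(7) p by blast
  ultimately show ?case
    unfolding Q_eq[of z] using val_add_le_max[of "(z - p) * poly R z" "poly Q p"] by simp
qed

lemma poly_val_diff_le_lipschitz:
  "\<exists>K\<ge>0. \<forall>z. v (z - w) \<le> 1 \<longrightarrow> v (poly Q z - poly Q w) \<le> K * v (z - w)"
proof (induction Q rule: pCons_induct)
  case 0
  then show ?case
    by auto
next
  case (pCons c p)
  then obtain K where K: "K \<ge> 0" "\<forall>z. v (z - w) \<le> 1 \<longrightarrow> v (poly p z - poly p w) \<le> K * v (z - w)"
    by blast
  show ?case
  proof (intro exI[of _ "(1 + v w) * K + v (poly p w)"] conjI allI impI)
    show "0 \<le> (1 + v w) * K + v (poly p w)"
      using K by simp
    fix z
    assume z: "v (z - w) \<le> 1"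
    have "v z \<le> 1 + v w"
      using val_add_le[of "z - w" w] z by simp
    then have "v (z * (poly p z - poly p w)) \<le> (1 + v w) * (K * v (z - w))"
      unfolding val_mult using K z by (intro mult_mono) auto
    moreover have "v ((z - w) * poly p w) = v (poly p w) * v (z - w)"
      by (simp add: val_mult)
    moreover have "poly (pCons c p) z - poly (pCons c p) w = z * (poly p z - poly p w) + (z - w) * poly p w"
      by (simp add: algebra_simps)
    ultimately show "v (poly (pCons c p) z - poly (pCons c p) w) \<le> ((1 + v w) * K + v (poly p w)) * v (z - w)"
      using val_add_le[of "z * (poly p z - poly p w)" "(z - w) * poly p w"]
      by (simp add: algebra_simps)
  qed
qed

lemma continuous_map_poly_val: "continuous_map L.mtopology euclideanreal (\<lambda>z. v (poly Q z))"
  unfolding L.continuous_map_from_metric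
proof (intro conjI ballI allI impI)
  fix w U
  assume "openin euclideanreal U \<and> v (poly Q w) \<in> U"
  then obtain e where e: "e > 0" "ball (v (poly Q w)) e \<subseteq> U"
    using open_contains_ball by (metis open_openin)
  obtain K where K: "K \<ge> 0" "\<forall>z. v (z - w) \<le> 1 \<longrightarrow> v (poly Q z - poly Q w) \<le> K * v (z - w)"
    using poly_val_diff_le_lipschitz by blast
  show "\<exists>\<delta>>0. \<forall>z. z \<in> UNIV \<and> v (w - z) < \<delta> \<longrightarrow> v (poly Q z) \<in> U"
  proof (intro exI[of _ "min 1 (e / (K + 1))"] conjI allI impI)
    show "0 < min 1 (e / (K + 1))"
      using e K by simp
    fix z
    assume "z \<in> UNIV \<and> v (w - z) < min 1 (e / (K + 1))"
    then have z: "v (z - w) < min 1 (e / (K + 1))"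
      by (simp add: val_minus_commute)
    have "\<bar>v (poly Q z) - v (poly Q w)\<bar> \<le> v (poly Q z - poly Q w)"
      by (rule abs_val_diff_le)
    also have "\<dots> \<le> K * v (z - w)"
      using K z by simp
    also have "\<dots> \<le> (K + 1) * v (z - w)"
      by (simp add: algebra_simps)
    also have "\<dots> < e"
      using z K by (simp add: field_simps)
    finally show "v (poly Q z) \<in> U"
      using e(2) by (simp add: dist_real_def abs_minus_commute subset_iff)
  qed
qed simp

lemma topspace_weak_top [simp]: "topspace (weak_top v) = balls_T v"
  unfolding weak_top_def topology_generated_by_topspace by blast

lemma openin_weak_top_poly_abs: "open U \<Longrightarrow> openin (weak_top v) {x \<in> balls_T v. poly_abs v Q x \<in> U}"
  unfolding weak_top_def by (rule topology_generated_by_Basis) blast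

lemma poly_abs_singleton [simp]: "poly_abs v Q {z} = v (poly Q z)"
  by (simp add: poly_abs_def)

lemma continuous_map_singleton_weak_top: "continuous_map L.mtopology (weak_top v) (\<lambda>z. {z})"
  unfolding weak_top_def
proof (rule continuous_on_generated_topo)
  fix U
  assume "U \<in> {balls_T v} \<union> {{x \<in> balls_T v. poly_abs v Q x \<in> W} |Q W. open W}"
  then consider "U = balls_T v" | Q W where "U = {x \<in> balls_T v. poly_abs v Q x \<in> W}" "open W"
    by blast
  then show "openin L.mtopology ((\<lambda>z. {z}) -` U \<inter> topspace L.mtopology)"
  proof cases
    case 1
    then have "(\<lambda>z. {z}) -` U = UNIV"
      using singleton_in_balls_T by auto
    then show ?thesis
      by simp
  next
    case 2
    then have "(\<lambda>z. {z}) -` U \<inter> topspace L.mtopology =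
      {z \<in> topspace L.mtopology. v (poly Q z) \<in> W}"
      using singleton_in_balls_T by auto
    then show ?thesis
      using openin_continuous_map_preimage[OF continuous_map_poly_val] 2(2) by simp
  qed
qed (use singleton_in_balls_T in blast)

lemma poly_abs_linear_vball:
  assumes r: "r \<in> radii" and a: "a \<in> vball z0 r"
  shows "poly_abs v [:-a, 1:] (vball z0 r) = r"
  unfolding poly_abs_def
proof (rule cSup_eq_maximum)
  obtain e where e: "v e = r"
    using radii_attained r by blast
  have "a + e \<in> vball z0 r"
    using val_diff_le_max[of "a + e" z0 a] a e by (simp add: mem_vball)
  then show "r \<in> (\<lambda>z. v (poly [:-a, 1:] z)) ` vball z0 r"
    using e by (intro image_eqI[of _ _ "a + e"]) auto
next
  fix y
  assume "y \<in> (\<lambda>z. v (poly [:-a, 1:] z)) ` vball z0 r"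
  then show "y \<le> r"
    using val_diff_le_radius a by auto
qed

definition equidistant :: "real \<Rightarrow> (nat \<Rightarrow> 'a) \<Rightarrow> bool" where
  "equidistant r xs \<longleftrightarrow> (\<forall>m n. m \<noteq> n \<longrightarrow> v (xs m - xs n) = r)"

lemma inj_if_equidistant: "0 < r \<Longrightarrow> equidistant r xs \<Longrightarrow> inj xs"
  unfolding equidistant_def inj_def by (metis diff_self less_irrefl val_0)

lemma eventually_poly_val_eq_poly_abs:
  assumes r: "0 < r" and xs: "range xs \<subseteq> vball z0 r" "equidistant r xs"
  shows "eventually (\<lambda>n. v (poly Q (xs n)) = poly_abs v Q (vball z0 r)) sequentially"
proof -
  have bound: "v (poly Q z) \<le> Max ((\<lambda>p. v (poly Q p)) ` xs ` B)"
    if "finite B" "card B = Suc (degree Q)" "z \<in> vball z0 r" for B z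
  proof (rule poly_val_le_if_equidistant_points[OF r, of "xs ` B" z0])
    show "xs ` B \<subseteq> vball z0 r"
      using xs(1) by auto
    show "\<forall>p\<in>xs ` B. \<forall>q\<in>xs ` B. p \<noteq> q \<longrightarrow> v (p - q) = r"
      using xs(2) unfolding equidistant_def by (metis imageE)
    have "card (xs ` B) = card B"
      using inj_if_equidistant[OF r xs(2)] by (simp add: card_image inj_on_subset)
    then show "degree Q < card (xs ` B)"
      using that by simp
  qed (use that in auto)
  define M where "M = poly_abs v Q (vball z0 r)"
  have M: "M = Sup ((\<lambda>z. v (poly Q z)) ` vball z0 r)"
    unfolding M_def poly_abs_def ..
  have bdd: "bdd_above ((\<lambda>z. v (poly Q z)) ` vball z0 r)"
    using bound[of "{..degree Q}"] unfolding bdd_above_def by auto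
  have upper: "v (poly Q (xs n)) \<le> M" for n
    unfolding M using bdd xs(1) by (intro cSup_upper) auto
  have "finite {n. v (poly Q (xs n)) < M}"
  proof (rule ccontr)
    assume "infinite {n. v (poly Q (xs n)) < M}"
    then obtain B where B: "finite B" "card B = Suc (degree Q)" "B \<subseteq> {n. v (poly Q (xs n)) < M}"
      using infinite_arbitrarily_large by blast
    then have "Max ((\<lambda>p. v (poly Q p)) ` xs ` B) < M"
      by (subst Max_less_iff) auto
    moreover have "M \<le> Max ((\<lambda>p. v (poly Q p)) ` xs ` B)"
      unfolding M using centre_in_vball[of r z0] r bound[OF B(1,2)] by (intro cSup_least) auto
    ultimately show False
      by simp
  qed
  then have "eventually (\<lambda>n. \<not> v (poly Q (xs n)) < M) sequentially"
    unfolding cofinite_eq_sequentially[symmetric] eventually_cofinite by simp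
  then show ?thesis
    by (rule eventually_mono) (use upper M_def in \<open>simp add: not_less order.antisym\<close>)
qed

lemma limitin_weak_top_equidistant:
  assumes r: "r \<in> value_set" and xs: "range xs \<subseteq> vball z0 r" "equidistant r xs"
  shows "limitin (weak_top v) (\<lambda>n. {xs n}) (vball z0 r) sequentially"
  unfolding weak_top_def
proof (rule limitin_topology_generated_by)
  show "vball z0 r \<in> \<Union> ({balls_T v} \<union> {{x \<in> balls_T v. poly_abs v Q x \<in> U} |Q U. open U})"
    using vball_in_balls_T[of r z0] r by (simp add: radii_def)
  fix U
  assume U: "U \<in> {balls_T v} \<union> {{x \<in> balls_T v. poly_abs v Q x \<in> U} |Q U. open U}"
    "vball z0 r \<in> U"
  then consider "U = balls_T v" | Q W where "U = {x \<in> balls_T v. poly_abs v Q x \<in> W}"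
    by blast
  then show "eventually (\<lambda>n. {xs n} \<in> U) sequentially"
  proof cases
    case 1
    then show ?thesis
      using singleton_in_balls_T by simp
  next
    case 2
    show ?thesis
      using eventually_poly_val_eq_poly_abs[OF value_set_pos[OF r] xs, of Q]
      by (rule eventually_mono) (use U(2) 2 singleton_in_balls_T in simp)
  qed
qed

definition has_finite_net :: "'a set \<Rightarrow> real \<Rightarrow> bool" where
  "has_finite_net S r \<longleftrightarrow> (\<exists>A. finite A \<and> A \<subseteq> S \<and> (\<forall>z\<in>S. \<exists>a\<in>A. v (z - a) < r))"

lemma finite_net_or_separated_seq:
  "has_finite_net S r \<or> (\<exists>xs :: nat \<Rightarrow> 'a. range xs \<subseteq> S \<and> (\<forall>m n. m \<noteq> n \<longrightarrow> r \<le> v (xs m - xs n)))"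
proof (cases "has_finite_net S r")
  case False
  then have no_net: "\<not> (\<exists>A. finite A \<and> A \<subseteq> S \<and> (\<forall>z\<in>S. \<exists>a\<in>A. v (z - a) < r))"
    unfolding has_finite_net_def .
  define next_pt where "next_pt A = (SOME z. z \<in> S \<and> (\<forall>a\<in>A. r \<le> v (z - a)))" for A
  have next_pt: "next_pt A \<in> S \<and> (\<forall>a\<in>A. r \<le> v (next_pt A - a))" if "finite A" "A \<subseteq> S" for A
  proof -
    have "\<exists>z. z \<in> S \<and> (\<forall>a\<in>A. r \<le> v (z - a))"
      using no_net that by (meson not_le)
    then show ?thesis
      unfolding next_pt_def by (rule someI_ex)
  qed
  define pts where "pts n = rec_nat {} (\<lambda>_ A. insert (next_pt A) A) n" for n
  define xs where "xs n = next_pt (pts n)" for n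
  have pts: "finite (pts n) \<and> pts n \<subseteq> S \<and> pts n = xs ` {..<n}" for n
  proof (induction n)
    case 0
    then show ?case
      by (simp add: pts_def)
  next
    case (Suc n)
    then have "xs n \<in> S"
      using next_pt unfolding xs_def by blast
    moreover have "pts (Suc n) = insert (xs n) (pts n)"
      unfolding pts_def xs_def by simp
    ultimately show ?case
      using Suc by (auto simp: lessThan_Suc)
  qed
  have far: "r \<le> v (xs n - xs m)" if "m < n" for m n
    using next_pt[of "pts n"] pts[of n] that unfolding xs_def[of n] by blast
  have "range xs \<subseteq> S"
    using next_pt pts unfolding xs_def by blast
  moreover have "r \<le> v (xs m - xs n)" if "m \<noteq> n" for m n
    using that far[of m n] far[of n m] val_minus_commute[of "xs m" "xs n"] by (cases "m < n") auto
  ultimately show ?thesis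
    by blast
qed simp

definition finite_subball_nets :: "'a set \<Rightarrow> bool" where
  "finite_subball_nets F \<longleftrightarrow> (\<forall>z0. \<forall>r\<in>value_set. has_finite_net (F \<inter> vball z0 r) r)"

lemma finite_subball_netsE:
  assumes "finite_subball_nets F" and "r \<in> value_set"
  obtains A where "finite A" "A \<subseteq> F \<inter> vball z0 r" "\<forall>z\<in>F \<inter> vball z0 r. \<exists>a\<in>A. v (z - a) < r"
proof -
  have "has_finite_net (F \<inter> vball z0 r) r"
    using assms unfolding finite_subball_nets_def by blast
  then show ?thesis
    using that unfolding has_finite_net_def by blast
qed

lemma finite_subball_nets_or_equidistant:
  "finite_subball_nets F \<or>
   (\<exists>z0. \<exists>r\<in>value_set. \<exists>xs :: nat \<Rightarrow> 'a. range xs \<subseteq> F \<inter> vball z0 r \<and> equidistant r xs)"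
proof (cases "finite_subball_nets F")
  case False
  then obtain z0 r where r: "r \<in> value_set" and no_net: "\<not> has_finite_net (F \<inter> vball z0 r) r"
    by (meson finite_subball_nets_def)
  obtain xs :: "nat \<Rightarrow> 'a"
    where xs: "range xs \<subseteq> F \<inter> vball z0 r" "\<forall>m n. m \<noteq> n \<longrightarrow> r \<le> v (xs m - xs n)"
    using finite_net_or_separated_seq[of "F \<inter> vball z0 r" r] no_net by blast
  have "v (xs m - xs n) = r" if "m \<noteq> n" for m n
  proof (rule order.antisym)
    have "xs m \<in> vball z0 r" "xs n \<in> vball z0 r"
      using xs(1) by auto
    then show "v (xs m - xs n) \<le> r"
      by (rule val_diff_le_radius)
    show "r \<le> v (xs m - xs n)"
      using xs(2) that by blast
  qed
  then have "equidistant r xs"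
    unfolding equidistant_def by blast
  then show ?thesis
    using r xs(1) by auto
qed simp

lemma closure_of_if_singleton_in_weak_closure:
  assumes "{a} \<in> weak_top v closure_of ((\<lambda>z. {z}) ` F)"
  shows "a \<in> L.mtopology closure_of F"
  unfolding L.metric_closure_of
proof safe
  have near: "\<exists>y\<in>(\<lambda>z. {z}) ` F. y \<in> U" if "{a} \<in> U" "openin (weak_top v) U" for U
    using assms that unfolding in_closure_of by blast
  fix e :: real
  assume "e > 0"
  then have "{a} \<in> {x \<in> balls_T v. poly_abs v [:-a, 1:] x \<in> {..<e}}"
    using singleton_in_balls_T by simp
  moreover have "openin (weak_top v) {x \<in> balls_T v. poly_abs v [:-a, 1:] x \<in> {..<e}}"
    by (rule openin_weak_top_poly_abs) simp
  ultimately have "\<exists>y\<in>(\<lambda>z. {z}) ` F. y \<in> {x \<in> balls_T v. poly_abs v [:-a, 1:] x \<in> {..<e}}"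
    by (rule near)
  then obtain z where z: "z \<in> F" "{z} \<in> {x \<in> balls_T v. poly_abs v [:-a, 1:] x \<in> {..<e}}"
    by blast
  then have "v (a - z) < e"
    using val_minus_commute[of z a] by simp
  with z(1) show "\<exists>y\<in>F. y \<in> L.mball a e"
    by (auto simp: L.in_mball)
qed simp

lemma continuous_map_singleton_strong_top: "continuous_map L.mtopology T.mtopology (\<lambda>z. {z})"
  unfolding T.continuous_map_to_metric
proof (intro ballI allI impI)
  fix x and e :: real
  assume "e > 0"
  then show "\<exists>U. openin L.mtopology U \<and> x \<in> U \<and> (\<forall>y\<in>U. {y} \<in> T.mball {x} e)"
    using singleton_in_balls_T dist_T_singleton by (intro exI[of _ "L.mball x e"]) auto
qed

end

locale discrete_nonarch_field = nonarch_field +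
  fixes \<rho> :: real
  assumes rho_pos: "0 < \<rho>" and rho_less_1: "\<rho> < 1"
    and value_set_powers: "v ` (UNIV - {0}) = range (\<lambda>k::int. \<rho> powi k)"
begin

lemma mem_value_set_iff: "r \<in> value_set \<longleftrightarrow> (\<exists>k::int. r = \<rho> powi k)"
  using value_set_powers unfolding value_set_def by auto

lemma value_set_mult_rho_power: "r \<in> value_set \<Longrightarrow> r * \<rho> ^ n \<in> value_set"
  using rho_pos by (auto simp: mem_value_set_iff power_int_add power_int_of_nat intro: exI[of _ "_ + int n"])

lemma value_set_div_rho: "r \<in> value_set \<Longrightarrow> r / \<rho> \<in> value_set"
  using rho_pos by (auto simp: mem_value_set_iff power_int_diff intro: exI[of _ "_ - 1"])

lemma value_set_unbounded: "\<exists>R\<in>value_set. M \<le> R"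
proof -
  obtain n where n: "M < (1 / \<rho>) ^ n"
    using real_arch_pow[of "1 / \<rho>" M] rho_pos rho_less_1 by auto
  have "(1 / \<rho>) ^ n = \<rho> powi (- int n)"
    by (simp add: power_int_minus power_divide inverse_eq_divide)
  then show ?thesis
    using n mem_value_set_iff by (metis less_le)
qed

lemma le_rho_mult_if_less_value:
  assumes r: "r \<in> value_set" and s: "s \<in> radii" and less: "s < r"
  shows "s \<le> \<rho> * r"
proof (cases "s = 0")
  case True
  then show ?thesis
    using value_set_pos[OF r] rho_pos by simp
next
  case False
  then obtain j k :: int where s_eq: "s = \<rho> powi j" and r_eq: "r = \<rho> powi k"
    using r s mem_value_set_iff unfolding radii_def by auto
  have "k < j"
  proof (rule ccontr)
    assume "\<not> k < j"
    then have "\<rho> powi k \<le> \<rho> powi j"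
      using power_int_decreasing[of j k \<rho>] rho_pos rho_less_1 by auto
    then show False
      using less s_eq r_eq by simp
  qed
  then have "\<rho> powi j \<le> \<rho> powi (k + 1)"
    using power_int_decreasing[of "k + 1" j \<rho>] rho_pos rho_less_1 by auto
  then show ?thesis
    using s_eq r_eq rho_pos by (simp add: power_int_add mult.commute)
qed

lemma finite_net_rho_power:
  assumes nets: "finite_subball_nets F" and R: "R \<in> value_set" and bounded: "\<forall>z\<in>F. v z \<le> R"
  shows "\<exists>A. finite A \<and> A \<subseteq> F \<and> (\<forall>z\<in>F. \<exists>a\<in>A. v (z - a) \<le> R * \<rho> ^ k)"
proof (induction k)
  case 0
  show ?case
  proof (cases "F = {}")
    case False
    then obtain a where a: "a \<in> F"
      by blast
    have "v (z - a) \<le> R" if "z \<in> F" for z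
    proof -
      have "max (v z) (v a) \<le> R"
        using bounded a that by simp
      then show ?thesis
        using val_diff_le_max_val[of z a] by linarith
    qed
    then show ?thesis
      using a by (intro exI[of _ "{a}"]) auto
  qed auto
next
  case (Suc k)
  then obtain A where A: "finite A" "A \<subseteq> F" "\<forall>z\<in>F. \<exists>a\<in>A. v (z - a) \<le> R * \<rho> ^ k"
    by blast
  have Rk: "R * \<rho> ^ k \<in> value_set"
    using value_set_mult_rho_power R by blast
  have "\<exists>B. finite B \<and> B \<subseteq> F \<inter> vball a (R * \<rho> ^ k) \<and>
     (\<forall>z\<in>F \<inter> vball a (R * \<rho> ^ k). \<exists>b\<in>B. v (z - b) < R * \<rho> ^ k)" for a
    by (rule finite_subball_netsE[OF nets Rk, of a]) fast
  then obtain B where B: "\<And>a. finite (B a) \<and> B a \<subseteq> F \<inter> vball a (R * \<rho> ^ k) \<and>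
     (\<forall>z\<in>F \<inter> vball a (R * \<rho> ^ k). \<exists>b\<in>B a. v (z - b) < R * \<rho> ^ k)"
    by metis
  show ?case
  proof (intro exI[of _ "\<Union> (B ` A)"] conjI ballI)
    show "finite (\<Union> (B ` A))" "\<Union> (B ` A) \<subseteq> F"
      using A(1) B by auto
    fix z
    assume z: "z \<in> F"
    then obtain a where a: "a \<in> A" "v (z - a) \<le> R * \<rho> ^ k"
      using A(3) by blast
    then have "z \<in> F \<inter> vball a (R * \<rho> ^ k)"
      using z by (simp add: mem_vball)
    then obtain b where b: "b \<in> B a" "v (z - b) < R * \<rho> ^ k"
      using B[of a] by blast
    then have "v (z - b) \<le> \<rho> * (R * \<rho> ^ k)"
      using le_rho_mult_if_less_value[OF Rk val_in_radii] by blast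
    then show "\<exists>b\<in>\<Union> (B ` A). v (z - b) \<le> R * \<rho> ^ Suc k"
      using a b by (auto simp: algebra_simps)
  qed
qed

lemma mtotally_bounded_if_finite_subball_nets:
  assumes nets: "finite_subball_nets F" and bounded: "\<exists>M. \<forall>z\<in>F. v z \<le> M"
  shows "L.mtotally_bounded F"
  unfolding L.mtotally_bounded_def
proof (intro allI impI)
  fix e :: real
  assume e: "e > 0"
  obtain M R where "\<forall>z\<in>F. v z \<le> M" "R \<in> value_set" "M \<le> R"
    using bounded value_set_unbounded by blast
  then have R: "R \<in> value_set" "\<forall>z\<in>F. v z \<le> R"
    by auto
  have "0 < R"
    using value_set_pos R(1) by blast
  then obtain k where "\<rho> ^ k < e / R"
    using real_arch_pow_inv[of "e / R" \<rho>] e rho_less_1 by auto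
  then have k: "R * \<rho> ^ k < e"
    using \<open>0 < R\<close> by (simp add: field_simps mult.commute)
  obtain A where A: "finite A" "A \<subseteq> F" "\<forall>z\<in>F. \<exists>a\<in>A. v (z - a) \<le> R * \<rho> ^ k"
    using finite_net_rho_power[OF nets R] by blast
  have "F \<subseteq> (\<Union>a\<in>A. L.mball a e)"
  proof
    fix z
    assume "z \<in> F"
    then obtain a where a: "a \<in> A" "v (z - a) \<le> R * \<rho> ^ k"
      using A(3) by blast
    then have "v (a - z) < e"
      using k val_minus_commute[of a z] by simp
    then show "z \<in> (\<Union>a\<in>A. L.mball a e)"
      using a(1) by auto
  qed
  then show "\<exists>K. finite K \<and> K \<subseteq> F \<and> F \<subseteq> (\<Union>x\<in>K. L.mball x e)"
    using A(1,2) by blast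
qed

(* With A a finite net of F \<inter> vball a r, a point z of F in the weak neighbourhood N of
   vball a r below would lie in vball a r (by discreteness) but at distance exactly r from
   every point of A. *)
lemma vball_notin_weak_closure_singletons:
  assumes nets: "finite_subball_nets F" and r: "r \<in> value_set"
  shows "vball a r \<notin> weak_top v closure_of ((\<lambda>z. {z}) ` F)"
proof
  assume closure: "vball a r \<in> weak_top v closure_of ((\<lambda>z. {z}) ` F)"
  have r_pos: "0 < r" and r_radius: "r \<in> radii"
    using value_set_pos r unfolding radii_def by auto
  obtain A where A: "finite A" "A \<subseteq> F \<inter> vball a r" "\<forall>z\<in>F \<inter> vball a r. \<exists>b\<in>A. v (z - b) < r"
    using finite_subball_netsE[OF nets r] .
  define U where "U b W = {x \<in> balls_T v. poly_abs v [:-b, 1:] x \<in> W}" for b W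
  define N where "N = \<Inter> (insert (U a {..<r / \<rho>}) ((\<lambda>b. U b {\<rho> * r<..}) ` A))"
  have "openin (weak_top v) (U b W)" if "open W" for b W
    unfolding U_def using that by (rule openin_weak_top_poly_abs)
  then have "openin (weak_top v) N"
    unfolding N_def using A(1) by (intro openin_Inter) auto
  moreover have "vball a r \<in> N"
  proof -
    have "r < r / \<rho>" "\<rho> * r < r"
      using r_pos rho_pos rho_less_1 by (simp_all add: field_simps)
    moreover have "poly_abs v [:-b, 1:] (vball a r) = r" if "b \<in> vball a r" for b
      using poly_abs_linear_vball[OF r_radius that] .
    ultimately show ?thesis
      unfolding N_def U_def using A(2) centre_in_vball[of r a] r_pos vball_in_balls_T[OF r_radius]
      by auto
  qed
  ultimately have "\<exists>y\<in>(\<lambda>z. {z}) ` F. y \<in> N"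
    using closure unfolding in_closure_of by blast
  then obtain z where z: "z \<in> F" "{z} \<in> N"
    by blast
  then have "v (z - a) < r / \<rho>"
    unfolding N_def U_def by simp
  then have "v (z - a) \<le> \<rho> * (r / \<rho>)"
    using le_rho_mult_if_less_value[OF value_set_div_rho[OF r] val_in_radii] by blast
  then have "z \<in> F \<inter> vball a r"
    using z(1) rho_pos by (simp add: mem_vball)
  then obtain b where b: "b \<in> A" "v (z - b) < r"
    using A(3) by blast
  then have "v (z - b) \<le> \<rho> * r"
    using le_rho_mult_if_less_value[OF r val_in_radii] by blast
  moreover have "\<rho> * r < v (z - b)"
    using z(2) b(1) unfolding N_def U_def by auto
  ultimately show False
    by simp
qed

lemma weak_closure_singletons_eq:
  assumes nets: "finite_subball_nets F"
  shows "weak_top v closure_of ((\<lambda>z. {z}) ` F) = (\<lambda>z. {z}) ` (L.mtopology closure_of F)"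
proof
  show "weak_top v closure_of ((\<lambda>z. {z}) ` F) \<subseteq> (\<lambda>z. {z}) ` (L.mtopology closure_of F)"
  proof
    fix x
    assume x: "x \<in> weak_top v closure_of ((\<lambda>z. {z}) ` F)"
    then have "x \<in> balls_T v"
      by (simp add: in_closure_of)
    then obtain a r where ar: "x = vball a r" "r \<in> radii"
      by (rule balls_TE)
    then have "r = 0"
      using x vball_notin_weak_closure_singletons[OF nets, of r a] unfolding radii_def by blast
    then have "x = {a}"
      using ar by (simp add: vball_0)
    then show "x \<in> (\<lambda>z. {z}) ` (L.mtopology closure_of F)"
      using x closure_of_if_singleton_in_weak_closure by blast
  qed
  show "(\<lambda>z. {z}) ` (L.mtopology closure_of F) \<subseteq> weak_top v closure_of ((\<lambda>z. {z}) ` F)"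
    using continuous_map_image_closure_subset[OF continuous_map_singleton_weak_top] .
qed

lemma compactin_strong_top_weak_closure:
  assumes "finite_subball_nets F" and "\<exists>M. \<forall>z\<in>F. v z \<le> M" and "complete_abs v"
  shows "compactin (strong_top v) (weak_top v closure_of ((\<lambda>z. {z}) ` F))"
proof -
  have "compactin L.mtopology (L.mtopology closure_of F)"
    using L.mtotally_bounded_eq_compact_closure_of[OF mcomplete_if_complete_abs]
      mtotally_bounded_if_finite_subball_nets assms by blast
  then show ?thesis
    unfolding weak_closure_singletons_eq[OF assms(1)] strong_top_def
    using image_compactin continuous_map_singleton_strong_top by blast
qed

end


theorem proposition1p3:
  fixes v :: "'a::field \<Rightarrow> real" and F :: "'a set"
  assumes "nonarch_abs v" and "nontrivial_abs v" and "discrete_abs v" and "complete_abs v"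
    and "\<exists>M. \<forall>z\<in>F. v z \<le> M"
    and "infinite F"
  shows "compactin (strong_top v) (weak_top v closure_of ((\<lambda>z. {z}) ` F))
    \<or> (\<exists>z0 r. r > 0 \<and> r \<in> v ` (UNIV - {0}) \<and>
         (\<exists>xs :: nat \<Rightarrow> 'a. inj xs \<and> (\<forall>n. xs n \<in> F \<and> xs n \<in> cball_v v z0 r) \<and>
            limitin (weak_top v) (\<lambda>n. {xs n}) (cball_v v z0 r) sequentially))"
proof -
  obtain \<rho> where "0 < \<rho>" "\<rho> < 1" "v ` (UNIV - {0}) = range (\<lambda>k::int. \<rho> powi k)"
    using assms(3) unfolding discrete_abs_def by blast
  then interpret discrete_nonarch_field v \<rho>
    using assms(1) by unfold_locales
  show ?thesis
  proof (cases "finite_subball_nets F")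
    case True
    show ?thesis
      using compactin_strong_top_weak_closure[OF True assms(5,4)] by (rule disjI1)
  next
    case False
    then obtain z0 r and xs :: "nat \<Rightarrow> 'a"
      where r: "r \<in> value_set" and xs: "range xs \<subseteq> F \<inter> vball z0 r" "equidistant r xs"
      using finite_subball_nets_or_equidistant by blast
    have "0 < r" "inj xs" "\<forall>n. xs n \<in> F \<and> xs n \<in> vball z0 r"
      using value_set_pos[OF r] inj_if_equidistant xs by auto
    moreover have "limitin (weak_top v) (\<lambda>n. {xs n}) (vball z0 r) sequentially"
      using xs by (intro limitin_weak_top_equidistant[OF r]) auto
    ultimately show ?thesis
      using r unfolding value_set_def by (intro disjI2 exI[of _ z0] exI[of _ r] conjI exI[of _ xs]) auto
  qed
qed

end
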